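(* Let $\ell$ be a positive integer and let $r_i=(a_i,b_i,c_i,d_i)\in\mathbb{Z}^4$, $i=1,2,3,4$, satisfy $a_ia_j+b_ib_j+c_ic_j+d_id_j=\delta_{ij}\ell$ for all $i,j\in\{1,2,3,4\}$. Let $D_i=\gcd(a_i,b_i,c_i,d_i)$ and assume $\gcd(D_1,D_2,D_3,D_4)=1$. Let $H=\{\sum_{i=1}^4 s_ir_i: s_i\in[0,1]\}$ be the hypercube spanned by the rows, and write its Ehrhart polynomial as $E_{H}(t)=\ell^2t^4+\alpha_1t^3+\alpha_2t^2+\alpha_3t+1$. Then $\alpha_1=\ell(D_1+D_2+D_3+D_4)$.
   Context: $\delta_{ij}$ is the Kronecker delta. The Ehrhart polynomial $E_H$ is the polynomial with $E_H(t)=\#(tH\cap\mathbb{Z}^4)$ for all positive integers $t$. *)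

theory Defs
  imports "HOL-Analysis.Analysis" "HOL-Computational_Algebra.Polynomial"
begin

text \<open>The rows r 1,...,r 4 of an integer 4x4 matrix are encoded as r :: int^4^4,
  with row i being r $ i and its coordinates r $ i $ j.\<close>

definition row_gcd :: "int^4^4 \<Rightarrow> 4 \<Rightarrow> int" where
  "row_gcd r i = Gcd (range (\<lambda>j. r $ i $ j))"

definition hypercube :: "int^4^4 \<Rightarrow> (real^4) set" where
  "hypercube r = {x. \<exists>s :: real^4. (\<forall>i. 0 \<le> s $ i \<and> s $ i \<le> 1) \<and>
       x = (\<Sum>i\<in>UNIV. s $ i *\<^sub>R (\<chi> j. real_of_int (r $ i $ j)))}"

definition lattice_count :: "(real^4) set \<Rightarrow> nat \<Rightarrow> nat" where
  "lattice_count H t = card {z :: int^4. (\<chi> j. real_of_int (z $ j)) \<in> (\<lambda>x. real t *\<^sub>R x) ` H}"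

end

theory Submission
  imports Defs
begin

(*
  Let R be the integer matrix with rows r_i. From R R^T = l I also R^T R = l I, so an integer
  point z lies in t H iff 0 <= R z <= t l componentwise: the lattice points of t H correspond to
  the points of the lattice L = R Z^4 in the box [0, t l]^4. Since R r_j = l e_j, L contains
  l Z^4, so the points of the box reducing to a residue rho in L /\ [0, l)^4 are the rho + l q
  with 0 <= q_i <= t - [rho_i <> 0], and E_H(t) = sum over rho of prod_i (t + [rho_i = 0]).
  The leading coefficient therefore counts the residues (so there are l^2 of them), and
  alpha_1 = sum_i #{rho. rho_i = 0}. The i-th coordinate maps L onto D_i Z (Bezout), and
  translating by residues shows that its l / D_i values in [0, l) are taken equally often,
  whence #{rho. rho_i = 0} = l D_i.
*)

lemma mat_mult_vector: "mat c *v x = c *s (x :: 'a::semiring_1^'n)"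
  by (simp add: vec_eq_iff matrix_vector_mult_def mat_def if_distrib if_distribR cong: if_cong)

lemma matrix_mult_eq_mat_commute:
  fixes A B :: "'a::field^'n^'n"
  assumes "c \<noteq> 0" and "A ** B = mat c"
  shows "B ** A = mat c"
proof -
  define B' where "B' = map_matrix (\<lambda>x. x / c) B"
  have "A ** B' = mat 1"
    using assms by (simp add: B'_def vec_eq_iff matrix_matrix_mult_def mat_def
        flip: sum_divide_distrib)
  then have "B' ** A = mat 1"
    by (rule matrix_left_right_inverse1)
  then show ?thesis
    using assms(1) by (simp add: B'_def vec_eq_iff matrix_matrix_mult_def mat_def
        sum_divide_distrib[symmetric] divide_eq_eq)
qed

lemma map_matrix_of_int_mult:
  "map_matrix of_int (A ** B) = (map_matrix of_int A ** map_matrix of_int B :: 'a::ring_1^'n^'m)"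
  by (simp add: vec_eq_iff matrix_matrix_mult_def)

lemma map_matrix_of_int_mat: "map_matrix of_int (mat c) = (mat (of_int c) :: 'a::ring_1^'n^'n)"
  by (simp add: vec_eq_iff mat_def)

lemma map_matrix_of_int_transpose:
  "map_matrix of_int (transpose A) = (transpose (map_matrix of_int A) :: 'a::ring_1^'n^'m)"
  by (simp add: vec_eq_iff transpose_def)

lemma int_matrix_mult_eq_mat_commute:
  fixes A B :: "int^'n^'n"
  assumes "c \<noteq> 0" and "A ** B = mat c"
  shows "B ** A = mat c"
proof -
  have "map_matrix real_of_int A ** map_matrix real_of_int B = mat (real_of_int c)"
    using arg_cong[OF assms(2), of "map_matrix real_of_int"]
    by (simp only: map_matrix_of_int_mult map_matrix_of_int_mat)
  then have "map_matrix real_of_int B ** map_matrix real_of_int A = mat (real_of_int c)"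
    by (rule matrix_mult_eq_mat_commute[rotated]) (use assms(1) in simp)
  then have "map_matrix real_of_int (B ** A) = map_matrix real_of_int (mat c)"
    by (simp only: map_matrix_of_int_mult map_matrix_of_int_mat)
  then show ?thesis
    by (simp add: vec_eq_iff)
qed

lemma sum_scaleR_rows_eq_vector_matrix_mult:
  "(\<Sum>i\<in>UNIV. s $ i *\<^sub>R (\<chi> j. real_of_int (A $ i $ j))) = s v* map_matrix real_of_int A"
  by (simp add: vec_eq_iff sum_component vector_matrix_mult_def mult.commute)

lemma map_matrix_of_int_mult_vector:
  "map_matrix of_int A *v (\<chi> j. of_int (z $ j)) = (\<chi> i. of_int ((A *v z) $ i) :: 'a::ring_1^'m)"
  by (simp add: vec_eq_iff matrix_vector_mult_def)

lemma dilated_row_cube_iff: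
  fixes M :: "real^'n^'n"
  assumes rows: "M ** transpose M = mat c" and cols: "transpose M ** M = mat c"
    and "c > 0" and "t > 0"
  shows "(\<exists>s. (\<forall>i. 0 \<le> s $ i \<and> s $ i \<le> 1) \<and> x = t *\<^sub>R (s v* M)) \<longleftrightarrow>
         (\<forall>i. 0 \<le> (M *v x) $ i \<and> (M *v x) $ i \<le> t * c)"
proof
  assume "\<exists>s. (\<forall>i. 0 \<le> s $ i \<and> s $ i \<le> 1) \<and> x = t *\<^sub>R (s v* M)"
  then obtain s where s: "\<forall>i. 0 \<le> s $ i \<and> s $ i \<le> 1" and x: "x = t *\<^sub>R (s v* M)"
    by blast
  have "M *v x = (t * c) *\<^sub>R s"
    by (simp add: x matrix_vector_mult_scaleR matrix_vector_mul_assoc rows mat_mult_vector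
        scalar_mult_eq_scaleR flip: transpose_matrix_vector)
  then show "\<forall>i. 0 \<le> (M *v x) $ i \<and> (M *v x) $ i \<le> t * c"
    using s assms(3,4) by (simp add: mult_left_le)
next
  assume bounds: "\<forall>i. 0 \<le> (M *v x) $ i \<and> (M *v x) $ i \<le> t * c"
  define s where "s = (1 / (t * c)) *\<^sub>R (M *v x)"
  have "t *\<^sub>R (s v* M) = x"
    using assms(3,4) by (simp add: s_def matrix_vector_mult_scaleR matrix_vector_mul_assoc cols
        mat_mult_vector scalar_mult_eq_scaleR flip: transpose_matrix_vector)
  moreover have "\<forall>i. 0 \<le> s $ i \<and> s $ i \<le> 1"
    using bounds assms(3,4) by (simp add: s_def field_simps)
  ultimately show "\<exists>s. (\<forall>i. 0 \<le> s $ i \<and> s $ i \<le> 1) \<and> x = t *\<^sub>R (s v* M)"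
    by metis
qed

lemma coeff_prod_monic_linear:
  fixes c :: "'a \<Rightarrow> 'b::comm_ring_1"
  assumes "finite A"
  shows "coeff (\<Prod>i\<in>A. [:c i, 1:]) (card A) = 1 \<and>
         coeff (\<Prod>i\<in>A. [:c i, 1:]) (card A - 1) = (if A = {} then 1 else (\<Sum>i\<in>A. c i))"
  using assms
proof (induction A rule: finite_induct)
  case empty
  then show ?case by simp
next
  case (insert a A)
  define P where "P = (\<Prod>i\<in>A. [:c i, 1:])"
  have "degree P \<le> card A"
    using degree_prod_sum_le[OF insert.hyps(1), of "\<lambda>i. [:c i, 1:]"] by (simp add: P_def)
  then have "coeff P (Suc (card A)) = 0"
    by (simp add: coeff_eq_0)
  moreover have "(\<Prod>i\<in>insert a A. [:c i, 1:]) = smult (c a) P + pCons 0 P"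
    using insert.hyps by (simp add: P_def)
  moreover have "card A = 0 \<longleftrightarrow> A = {}"
    using insert.hyps(1) by simp
  ultimately show ?case
    using insert by (cases "card A") (auto simp: P_def algebra_simps)
qed

lemma coeff_sum_prod_monic_linear:
  fixes c :: "'a \<Rightarrow> 'b \<Rightarrow> 'c::comm_ring_1"
  assumes "finite A" and "A \<noteq> {}"
  shows "coeff (\<Sum>x\<in>F. \<Prod>i\<in>A. [:c x i, 1:]) (card A) = of_nat (card F)"
    and "coeff (\<Sum>x\<in>F. \<Prod>i\<in>A. [:c x i, 1:]) (card A - 1) = (\<Sum>i\<in>A. \<Sum>x\<in>F. c x i)"
proof -
  have "coeff (\<Prod>i\<in>A. [:c x i, 1:]) (card A) = 1"
    and "coeff (\<Prod>i\<in>A. [:c x i, 1:]) (card A - 1) = (\<Sum>i\<in>A. c x i)" for x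
    using coeff_prod_monic_linear[OF assms(1), of "c x"] assms(2) by simp_all
  then show "coeff (\<Sum>x\<in>F. \<Prod>i\<in>A. [:c x i, 1:]) (card A) = of_nat (card F)"
    and "coeff (\<Sum>x\<in>F. \<Prod>i\<in>A. [:c x i, 1:]) (card A - 1) = (\<Sum>i\<in>A. \<Sum>x\<in>F. c x i)"
    by (simp_all add: coeff_sum sum.swap[of _ F])
qed

lemma poly_eqI_infinite:
  fixes p q :: "'a::idom poly"
  assumes "infinite S" and "\<And>x. x \<in> S \<Longrightarrow> poly p x = poly q x"
  shows "p = q"
proof (rule ccontr)
  assume "p \<noteq> q"
  then have "finite {x. poly (p - q) x = 0}"
    by (intro poly_roots_finite) simp
  moreover have "S \<subseteq> {x. poly (p - q) x = 0}"
    using assms(2) by auto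
  ultimately show False
    using assms(1) finite_subset by blast
qed

lemma Gcd_int_lincomb:
  fixes f :: "'a \<Rightarrow> int"
  assumes "finite I"
  shows "\<exists>c. (\<Sum>k\<in>I. c k * f k) = Gcd (f ` I)"
  using assms
proof (induction I rule: finite_induct)
  case empty
  then show ?case by simp
next
  case (insert a I)
  then obtain c where c: "(\<Sum>k\<in>I. c k * f k) = Gcd (f ` I)"
    by blast
  obtain u v where uv: "u * f a + v * Gcd (f ` I) = gcd (f a) (Gcd (f ` I))"
    using bezout_int by blast
  define c' where "c' k = (if k = a then u else v * c k)" for k
  have "(\<Sum>k\<in>insert a I. c' k * f k) = u * f a + v * (\<Sum>k\<in>I. c k * f k)"
    using insert.hyps by (auto simp: c'_def sum_distrib_left mult.assoc intro!: sum.cong)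
  then show ?case
    using uv c by auto
qed

lemma range_int_linear_form:
  fixes a :: "int^'n"
  shows "range (\<lambda>z. \<Sum>j\<in>UNIV. a $ j * z $ j) = range ((*) (Gcd (range (($) a))))"
proof (intro set_eqI iffI)
  fix v assume "v \<in> range (\<lambda>z. \<Sum>j\<in>UNIV. a $ j * z $ j)"
  then obtain z where "v = (\<Sum>j\<in>UNIV. a $ j * z $ j)"
    by blast
  then have "Gcd (range (($) a)) dvd v"
    by (simp add: dvd_sum dvd_mult2)
  then show "v \<in> range ((*) (Gcd (range (($) a))))"
    by (auto elim!: dvdE)
next
  fix v assume "v \<in> range ((*) (Gcd (range (($) a))))"
  then obtain m where v: "v = Gcd (range (($) a)) * m"
    by blast
  obtain c where c: "(\<Sum>j\<in>UNIV. c j * a $ j) = Gcd (range (($) a))"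
    using Gcd_int_lincomb[of UNIV "($) a"] by auto
  have "v = (\<Sum>j\<in>UNIV. a $ j * (\<chi> j. m * c j) $ j)"
    by (simp add: v flip: c) (simp add: sum_distrib_left mult_ac)
  then show "v \<in> range (\<lambda>z. \<Sum>j\<in>UNIV. a $ j * z $ j)"
    by blast
qed

lemma vec_componentwise_eq_image:
  "{v::'a^'n. \<forall>i. v $ i \<in> A i} = vec_lambda ` (Pi\<^sub>E UNIV A)"
proof (intro set_eqI iffI)
  fix v :: "'a^'n"
  assume "v \<in> {v. \<forall>i. v $ i \<in> A i}"
  then have "vec_nth v \<in> Pi\<^sub>E UNIV A"
    by auto
  then show "v \<in> vec_lambda ` Pi\<^sub>E UNIV A"
    by (metis image_eqI vec_nth_inverse)
qed auto

lemma card_vec_componentwise: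
  "card {v::'a^'n. \<forall>i. v $ i \<in> A i} = (\<Prod>i\<in>UNIV. card (A i))"
proof -
  have "inj_on vec_lambda (Pi\<^sub>E (UNIV::'n set) A)"
    by (rule inj_onI) (simp add: vec_lambda_inject)
  then show ?thesis
    by (simp add: vec_componentwise_eq_image card_image card_PiE)
qed

lemma finite_vec_componentwise:
  "(\<And>i. finite (A i)) \<Longrightarrow> finite {v::'a^'n. \<forall>i. v $ i \<in> A i}"
  by (simp add: vec_componentwise_eq_image finite_PiE)

lemma shifted_residue_bounds:
  fixes \<rho> l q T :: int
  assumes "0 \<le> \<rho>" and "\<rho> < l"
  shows "0 \<le> \<rho> + l * q \<and> \<rho> + l * q \<le> T * l \<longleftrightarrow> 0 \<le> q \<and> q \<le> T - of_bool (\<rho> \<noteq> 0)"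
proof -
  have l: "l > 0"
    using assms by simp
  have lower: "0 \<le> \<rho> + l * q \<longleftrightarrow> 0 \<le> q"
    using mult_le_cancel_left_pos[OF l, of 0 q] mult_le_cancel_left_pos[OF l, of q "- 1"] assms
    by auto
  have upper: "\<rho> + l * q \<le> T * l \<longleftrightarrow> q \<le> T - of_bool (\<rho> \<noteq> 0)"
  proof (cases "\<rho> = 0")
    case True
    then show ?thesis
      using mult_le_cancel_left_pos[OF l, of q T] by (simp add: mult.commute)
  next
    case False
    have "T * l \<le> l * q \<longleftrightarrow> T \<le> q" "l * q \<le> T * l - l \<longleftrightarrow> q \<le> T - 1"
      using mult_le_cancel_left_pos[OF l, of T q] mult_le_cancel_left_pos[OF l, of q "T - 1"]
      by (simp_all add: algebra_simps)
    moreover have "of_bool (\<rho> \<noteq> 0) = (1::int)"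
      using False by simp
    ultimately show ?thesis
      using False assms by (smt (verit))
  qed
  show ?thesis
    using lower upper by blast
qed

locale periodic_lattice =
  fixes l :: int and L :: "(int^'n) set"
  assumes period_pos: "l > 0"
    and zero_mem: "0 \<in> L"
    and diff_mem: "y \<in> L \<Longrightarrow> y' \<in> L \<Longrightarrow> y - y' \<in> L"
    and period_mem: "l *s w \<in> L"
begin

lemma add_mem: "y \<in> L \<Longrightarrow> y' \<in> L \<Longrightarrow> y + y' \<in> L"
  using diff_mem[of y "0 - y'"] diff_mem[OF zero_mem] by simp

lemma shift_mem: "y \<in> L \<Longrightarrow> y + l *s w \<in> L"
  using add_mem period_mem by blast

definition reduce :: "int^'n \<Rightarrow> int^'n" where
  "reduce y = (\<chi> i. y $ i mod l)"

definition residues :: "(int^'n) set" where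
  "residues = {y \<in> L. \<forall>i. 0 \<le> y $ i \<and> y $ i < l}"

definition box_points :: "nat \<Rightarrow> (int^'n) set" where
  "box_points t = {y \<in> L. \<forall>i. 0 \<le> y $ i \<and> y $ i \<le> int t * l}"

lemma reduce_eq_shift: "reduce y = y + l *s (\<chi> i. - (y $ i div l))"
  by (simp add: reduce_def vec_eq_iff minus_div_mult_eq_mod [symmetric] algebra_simps)

lemma reduce_residue: "\<rho> \<in> residues \<Longrightarrow> reduce \<rho> = \<rho>"
  by (simp add: residues_def reduce_def vec_eq_iff)

lemma reduce_add_reduce: "reduce (reduce y + z) = reduce (y + z)"
  by (simp add: reduce_def vec_eq_iff mod_add_left_eq)

lemma reduce_diff_reduce: "reduce (reduce y - z) = reduce (y - z)"
  by (simp add: reduce_def vec_eq_iff mod_diff_left_eq)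

lemma reduce_in_residues:
  assumes "y \<in> L"
  shows "reduce y \<in> residues"
proof -
  have "reduce y \<in> L"
    unfolding reduce_eq_shift using assms by (rule shift_mem)
  then show ?thesis
    using period_pos by (simp add: residues_def reduce_def)
qed

lemma finite_residues: "finite residues"
  by (rule finite_subset[OF _ finite_vec_componentwise[of "\<lambda>_. {0..l}"]])
    (auto simp: residues_def less_imp_le)

lemma finite_box_points: "finite (box_points t)"
  by (rule finite_subset[OF _ finite_vec_componentwise[of "\<lambda>_. {0..int t * l}"]])
    (auto simp: box_points_def)

lemma box_points_fiber:
  assumes "\<rho> \<in> residues"
  shows "{y \<in> box_points t. reduce y = \<rho>} =
    (\<lambda>q. \<rho> + l *s q) ` {q. \<forall>i. q $ i \<in> {0..int t - of_bool (\<rho> $ i \<noteq> 0)}}"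
proof -
  have \<rho>: "\<rho> \<in> L" "0 \<le> \<rho> $ i" "\<rho> $ i < l" for i
    using assms by (auto simp: residues_def)
  have bounds: "0 \<le> (\<rho> + l *s q) $ i \<and> (\<rho> + l *s q) $ i \<le> int t * l \<longleftrightarrow>
      q $ i \<in> {0..int t - of_bool (\<rho> $ i \<noteq> 0)}" for q i
    using shifted_residue_bounds[OF \<rho>(2,3)] by simp
  show ?thesis
  proof (intro set_eqI iffI)
    fix y
    assume y: "y \<in> {y \<in> box_points t. reduce y = \<rho>}"
    define q where "q = (\<chi> i. y $ i div l)"
    have "y = \<rho> + l *s q"
      using y mult_div_mod_eq[of l "y $ i" for i] by (auto simp: reduce_def q_def vec_eq_iff add.commute)
    moreover have "\<forall>i. q $ i \<in> {0..int t - of_bool (\<rho> $ i \<noteq> 0)}"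
      using y bounds[of q] unfolding \<open>y = \<rho> + l *s q\<close> box_points_def by blast
    ultimately show "y \<in> (\<lambda>q. \<rho> + l *s q) ` {q. \<forall>i. q $ i \<in> {0..int t - of_bool (\<rho> $ i \<noteq> 0)}}"
      by blast
  next
    fix y
    assume "y \<in> (\<lambda>q. \<rho> + l *s q) ` {q. \<forall>i. q $ i \<in> {0..int t - of_bool (\<rho> $ i \<noteq> 0)}}"
    then obtain q where y: "y = \<rho> + l *s q" and q: "\<forall>i. q $ i \<in> {0..int t - of_bool (\<rho> $ i \<noteq> 0)}"
      by blast
    have "y \<in> box_points t"
      using shift_mem[OF \<rho>(1)] bounds q by (simp add: box_points_def y)
    moreover have "reduce y = \<rho>"
      using \<rho>(2,3) by (simp add: reduce_def y vec_eq_iff)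
    ultimately show "y \<in> {y \<in> box_points t. reduce y = \<rho>}"
      by blast
  qed
qed

lemma card_box_points_fiber:
  assumes "\<rho> \<in> residues"
  shows "card {y \<in> box_points t. reduce y = \<rho>} = (\<Prod>i\<in>UNIV. t + of_bool (\<rho> $ i = 0))"
proof -
  have "inj (\<lambda>q. \<rho> + l *s q)"
    using period_pos by (auto intro!: injI simp: vec_eq_iff)
  then have "card {y \<in> box_points t. reduce y = \<rho>} =
      card {q. \<forall>i. q $ i \<in> {0..int t - of_bool (\<rho> $ i \<noteq> 0)}}"
    by (simp add: box_points_fiber[OF assms] card_image inj_on_subset)
  also have "\<dots> = (\<Prod>i\<in>UNIV. t + of_bool (\<rho> $ i = 0))"
    unfolding card_vec_componentwise by (intro prod.cong) auto
  finally show ?thesis .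
qed

lemma card_box_points:
  "card (box_points t) = (\<Sum>\<rho>\<in>residues. \<Prod>i\<in>UNIV. t + of_bool (\<rho> $ i = 0))"
proof -
  have "reduce ` box_points t \<subseteq> residues"
    using reduce_in_residues by (auto simp: box_points_def)
  from sum.group[OF finite_box_points finite_residues this, of "\<lambda>_. 1::nat"]
  have "card (box_points t) = (\<Sum>\<rho>\<in>residues. card {y \<in> box_points t. reduce y = \<rho>})"
    by simp
  then show ?thesis
    by (simp add: card_box_points_fiber)
qed

lemma residue_coordinate_fiber_card:
  assumes "v \<in> (\<lambda>\<rho>. \<rho> $ i) ` residues"
  shows "card {\<rho> \<in> residues. \<rho> $ i = v} = card {\<rho> \<in> residues. \<rho> $ i = 0}"
proof -
  obtain \<sigma> where \<sigma>: "\<sigma> \<in> residues" "\<sigma> $ i = v"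
    using assms by blast
  have mem: "\<rho> \<in> L" if "\<rho> \<in> residues" for \<rho>
    using that by (simp add: residues_def)
  have "bij_betw (\<lambda>\<rho>. reduce (\<rho> + \<sigma>)) {\<rho> \<in> residues. \<rho> $ i = 0} {\<rho> \<in> residues. \<rho> $ i = v}"
  proof (rule bij_betw_byWitness[where f' = "\<lambda>\<rho>. reduce (\<rho> - \<sigma>)"])
    show "\<forall>\<rho>\<in>{\<rho> \<in> residues. \<rho> $ i = 0}. reduce (reduce (\<rho> + \<sigma>) - \<sigma>) = \<rho>"
      by (simp add: reduce_diff_reduce reduce_residue)
    show "\<forall>\<rho>\<in>{\<rho> \<in> residues. \<rho> $ i = v}. reduce (reduce (\<rho> - \<sigma>) + \<sigma>) = \<rho>"
      by (simp add: reduce_add_reduce reduce_residue)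
    show "(\<lambda>\<rho>. reduce (\<rho> + \<sigma>)) ` {\<rho> \<in> residues. \<rho> $ i = 0} \<subseteq> {\<rho> \<in> residues. \<rho> $ i = v}"
    proof (intro image_subsetI)
      fix \<rho> assume "\<rho> \<in> {\<rho> \<in> residues. \<rho> $ i = 0}"
      then have "reduce (\<rho> + \<sigma>) \<in> residues"
        using \<sigma>(1) by (blast intro: reduce_in_residues add_mem mem)
      moreover have "reduce (\<rho> + \<sigma>) $ i = v"
        using \<open>\<rho> \<in> {\<rho> \<in> residues. \<rho> $ i = 0}\<close> \<sigma> arg_cong[OF reduce_residue[OF \<sigma>(1)], of "\<lambda>x. x $ i"]
        by (simp add: reduce_def)
      ultimately show "reduce (\<rho> + \<sigma>) \<in> {\<rho> \<in> residues. \<rho> $ i = v}"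
        by blast
    qed
    show "(\<lambda>\<rho>. reduce (\<rho> - \<sigma>)) ` {\<rho> \<in> residues. \<rho> $ i = v} \<subseteq> {\<rho> \<in> residues. \<rho> $ i = 0}"
    proof (intro image_subsetI)
      fix \<rho> assume "\<rho> \<in> {\<rho> \<in> residues. \<rho> $ i = v}"
      then have "reduce (\<rho> - \<sigma>) \<in> residues"
        using \<sigma>(1) by (blast intro: reduce_in_residues diff_mem mem)
      moreover have "reduce (\<rho> - \<sigma>) $ i = 0"
        using \<open>\<rho> \<in> {\<rho> \<in> residues. \<rho> $ i = v}\<close> \<sigma>(2) by (simp add: reduce_def)
      ultimately show "reduce (\<rho> - \<sigma>) \<in> {\<rho> \<in> residues. \<rho> $ i = 0}"
        by blast
    qed
  qed
  then show ?thesis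
    by (simp add: bij_betw_same_card)
qed

lemma coordinate_step_dvd_period:
  assumes "(\<lambda>y. y $ i) ` L = range ((*) D)"
  shows "D dvd l"
proof -
  have "(l *s (\<chi> j. 1)) $ i \<in> range ((*) D)"
    using assms period_mem by blast
  then show ?thesis
    by auto
qed

lemma residue_coordinate_image:
  assumes coord: "(\<lambda>y. y $ i) ` L = range ((*) D)" and "D > 0"
  shows "(\<lambda>\<rho>. \<rho> $ i) ` residues = (*) D ` {0..<l div D}"
proof -
  obtain k where k: "l = D * k"
    using coordinate_step_dvd_period[OF coord] by blast
  then have "l div D = k"
    using \<open>D > 0\<close> by simp
  then have bounds: "0 \<le> D * m \<and> D * m < l \<longleftrightarrow> m \<in> {0..<l div D}" for m
    using \<open>D > 0\<close> mult_less_cancel_left_pos[of D m k] by (simp add: k zero_le_mult_iff)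
  show ?thesis
  proof (intro set_eqI iffI)
    fix v
    assume "v \<in> (\<lambda>\<rho>. \<rho> $ i) ` residues"
    then obtain \<rho> where \<rho>: "\<rho> \<in> residues" "v = \<rho> $ i"
      by blast
    then have "v \<in> range ((*) D)"
      unfolding coord[symmetric] by (auto simp: residues_def)
    then obtain m where "v = D * m"
      by blast
    moreover have "0 \<le> v" "v < l"
      using \<rho> by (auto simp: residues_def)
    ultimately show "v \<in> (*) D ` {0..<l div D}"
      using bounds[of m] by blast
  next
    fix v
    assume "v \<in> (*) D ` {0..<l div D}"
    then have "v \<in> (\<lambda>y. y $ i) ` L" "0 \<le> v" "v < l"
      using bounds by (auto simp only: coord)
    then obtain y where "y \<in> L" "v = y $ i"
      by blast
    moreover have "reduce y $ i = v"
      using \<open>v = y $ i\<close> \<open>0 \<le> v\<close> \<open>v < l\<close> by (simp add: reduce_def)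
    ultimately show "v \<in> (\<lambda>\<rho>. \<rho> $ i) ` residues"
      using reduce_in_residues by (metis image_eqI)
  qed
qed

lemma card_residues_coordinate:
  assumes "(\<lambda>y. y $ i) ` L = range ((*) D)" and "D > 0"
  shows "int (card residues) = (l div D) * int (card {\<rho> \<in> residues. \<rho> $ i = 0})"
proof -
  let ?img = "(\<lambda>\<rho>. \<rho> $ i) ` residues"
  have "card residues = (\<Sum>v\<in>?img. card {\<rho> \<in> residues. \<rho> $ i = v})"
    using sum.group[OF finite_residues finite_imageI[OF finite_residues] subset_refl,
        where g = "\<lambda>\<rho>. \<rho> $ i" and h = "\<lambda>_. 1::nat"]
    by simp
  also have "\<dots> = card ?img * card {\<rho> \<in> residues. \<rho> $ i = 0}"
    by (simp add: residue_coordinate_fiber_card)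
  also have "card ?img = nat (l div D)"
    using \<open>D > 0\<close> by (simp add: residue_coordinate_image[OF assms] card_image inj_on_def)
  finally show ?thesis
    using \<open>D > 0\<close> period_pos by (simp add: pos_imp_zdiv_nonneg_iff)
qed

lemma card_residues_coordinate_zero:
  assumes coord: "(\<lambda>y. y $ i) ` L = range ((*) D)" and "D > 0"
    and "int (card residues) = l^2"
  shows "int (card {\<rho> \<in> residues. \<rho> $ i = 0}) = l * D"
proof -
  obtain k where k: "l = D * k"
    using coordinate_step_dvd_period[OF coord] by blast
  with \<open>D > 0\<close> period_pos have "k \<noteq> 0" "l div D = k"
    by auto
  moreover have "k * int (card {\<rho> \<in> residues. \<rho> $ i = 0}) = k * (l * D)"
    using card_residues_coordinate[OF assms(1,2)] assms(3) \<open>l div D = k\<close>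
    by (simp add: k power2_eq_square ac_simps)
  ultimately show ?thesis
    by simp
qed

definition box_count_poly :: "real poly" where
  "box_count_poly = (\<Sum>\<rho>\<in>residues. \<Prod>i\<in>UNIV. [:of_bool (\<rho> $ i = 0), 1:])"

lemma poly_box_count_poly: "poly box_count_poly (real t) = real (card (box_points t))"
  by (simp add: box_count_poly_def card_box_points poly_sum poly_prod add.commute)

lemma coeff_box_count_poly_top: "coeff box_count_poly CARD('n) = real (card residues)"
  unfolding box_count_poly_def by (rule coeff_sum_prod_monic_linear(1)[OF finite UNIV_not_empty])

lemma coeff_box_count_poly_subtop:
  "coeff box_count_poly (CARD('n) - 1) = (\<Sum>i\<in>UNIV. real (card {\<rho> \<in> residues. \<rho> $ i = 0}))"
proof -
  have "{\<rho> \<in> residues. \<rho> $ i = 0} = residues \<inter> {\<rho>. \<rho> $ i = 0}" for i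
    by blast
  then have "(\<Sum>\<rho>\<in>residues. of_bool (\<rho> $ i = 0)) = real (card {\<rho> \<in> residues. \<rho> $ i = 0})" for i
    by (simp only: sum_of_bool_eq finite_residues)
  then show ?thesis
    unfolding box_count_poly_def coeff_sum_prod_monic_linear(2)[OF finite UNIV_not_empty]
    by (simp only:)
qed

end

locale scaled_orthogonal =
  fixes l :: int and R :: "int^'n^'n"
  assumes scale_pos: "l > 0"
    and rows_orthogonal: "R ** transpose R = mat l"
begin

lemma columns_orthogonal: "transpose R ** R = mat l"
  using int_matrix_mult_eq_mat_commute[OF _ rows_orthogonal] scale_pos by simp

lemma transpose_mult_cancel: "transpose R *v (R *v z) = l *s z"
  by (simp only: matrix_vector_mul_assoc columns_orthogonal mat_mult_vector)

lemma inj_mult_vector: "inj ((*v) R)"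
proof (rule injI)
  fix z z' :: "int^'n"
  assume "R *v z = R *v z'"
  then have "l *s z = l *s z'"
    by (metis transpose_mult_cancel)
  then show "z = z'"
    using scale_pos by (simp add: vec_eq_iff)
qed

sublocale periodic_lattice l "range ((*v) R)"
proof
  show "l > 0"
    by (rule scale_pos)
  show "0 \<in> range ((*v) R)"
    by (metis matrix_vector_mult_0_right rangeI)
  show "y - y' \<in> range ((*v) R)" if "y \<in> range ((*v) R)" "y' \<in> range ((*v) R)" for y y'
    using that by (auto simp flip: matrix_vector_mult_diff_distrib)
  show "l *s w \<in> range ((*v) R)" for w
    using rangeI[of "(*v) R" "transpose R *v w"]
    by (simp only: matrix_vector_mul_assoc rows_orthogonal mat_mult_vector)
qed

lemma row_Gcd_pos: "Gcd (range (($) (R $ i))) > 0"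
proof -
  have "(\<Sum>k\<in>UNIV. R $ i $ k * R $ i $ k) = l"
    using arg_cong[OF rows_orthogonal, of "\<lambda>M. M $ i $ i"]
    by (simp add: matrix_matrix_mult_def transpose_def mat_def)
  then have "R $ i \<noteq> 0"
    using scale_pos by auto
  then have "Gcd (range (($) (R $ i))) \<noteq> 0"
    by (auto simp: Gcd_0_iff vec_eq_iff)
  then show ?thesis
    using Gcd_int_greater_eq_0 by (simp add: order_le_neq_trans)
qed

lemma coordinate_image: "(\<lambda>y. y $ i) ` range ((*v) R) = range ((*) (Gcd (range (($) (R $ i)))))"
  using range_int_linear_form[of "R $ i"] by (simp add: image_image matrix_vector_mult_def)

lemma card_residues_row_zero:
  assumes "int (card residues) = l^2"
  shows "int (card {\<rho> \<in> residues. \<rho> $ i = 0}) = l * Gcd (range (($) (R $ i)))"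
  using coordinate_image row_Gcd_pos assms by (rule card_residues_coordinate_zero)

lemma int_point_in_dilated_row_cube_iff:
  assumes "t > 0"
  shows "(\<exists>s. (\<forall>i. 0 \<le> s $ i \<and> s $ i \<le> 1) \<and>
            (\<chi> j. real_of_int (z $ j)) = real t *\<^sub>R (s v* map_matrix real_of_int R)) \<longleftrightarrow>
         (\<forall>i. 0 \<le> (R *v z) $ i \<and> (R *v z) $ i \<le> int t * l)"
proof -
  let ?M = "map_matrix real_of_int R"
  have "?M ** transpose ?M = mat (real_of_int l)" "transpose ?M ** ?M = mat (real_of_int l)"
    using arg_cong[OF rows_orthogonal, of "map_matrix real_of_int"]
      arg_cong[OF columns_orthogonal, of "map_matrix real_of_int"]
    by (simp_all only: map_matrix_of_int_mult map_matrix_of_int_transpose map_matrix_of_int_mat)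
  moreover have "(?M *v (\<chi> j. real_of_int (z $ j))) $ i = real_of_int ((R *v z) $ i)" for i
    by (simp add: map_matrix_of_int_mult_vector)
  moreover have "real t * real_of_int l = real_of_int (int t * l)"
    by simp
  ultimately show ?thesis
    using dilated_row_cube_iff[of ?M "real_of_int l" "real t"] scale_pos assms
    by (simp only: of_int_le_iff of_int_0_le_iff)
qed

lemma card_int_points_dilated_row_cube:
  assumes "t > 0"
  shows "card {z. \<exists>s. (\<forall>i. 0 \<le> s $ i \<and> s $ i \<le> 1) \<and>
            (\<chi> j. real_of_int (z $ j)) = real t *\<^sub>R (s v* map_matrix real_of_int R)} =
         card (box_points t)"
proof -
  have "box_points t = (*v) R ` {z. \<forall>i. 0 \<le> (R *v z) $ i \<and> (R *v z) $ i \<le> int t * l}"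
    by (auto simp: box_points_def)
  then show ?thesis
    by (simp add: int_point_in_dilated_row_cube_iff[OF assms] card_image inj_on_subset[OF inj_mult_vector])
qed

end

lemma lattice_count_hypercube:
  "lattice_count (hypercube r) t = card {z. \<exists>s. (\<forall>i. 0 \<le> s $ i \<and> s $ i \<le> 1) \<and>
     (\<chi> j. real_of_int (z $ j)) = real t *\<^sub>R (s v* map_matrix real_of_int r)}"
  unfolding lattice_count_def hypercube_def sum_scaleR_rows_eq_vector_matrix_mult
  by (auto intro!: arg_cong[where f = card])

theorem proposition2p16:
  fixes l :: int and r :: "int^4^4" and E :: "real poly"
  assumes l_pos: "l > 0"
    and orth: "\<forall>i j. (\<Sum>k\<in>UNIV. r $ i $ k * r $ j $ k) = (if i = j then l else 0)"
    and gcd1: "Gcd (range (row_gcd r)) = 1"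
    and ehrhart: "\<forall>t::nat. t > 0 \<longrightarrow> real (lattice_count (hypercube r) t) = poly E (real t)"
    and shape: "degree E = 4" "coeff E 4 = real_of_int (l^2)" "coeff E 0 = 1"
  shows "coeff E 3 = real_of_int (l * (\<Sum>i\<in>UNIV. row_gcd r i))"
proof -
  have "r ** transpose r = mat l"
    using orth by (simp add: vec_eq_iff matrix_matrix_mult_def transpose_def mat_def)
  then interpret scaled_orthogonal l r
    using l_pos by unfold_locales
  have "E = box_count_poly"
  proof (rule poly_eqI_infinite)
    show "infinite (real ` {0<..})"
      by (simp add: finite_image_iff infinite_Ioi)
  next
    fix x
    assume "x \<in> real ` {0<..}"
    then obtain t where "t > 0" and "x = real t"
      by auto
    then show "poly E x = poly box_count_poly x"
      using ehrhart by (simp add: lattice_count_hypercube card_int_points_dilated_row_cube poly_box_count_poly)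
  qed
  then have "real (card residues) = real_of_int (l^2)"
    using coeff_box_count_poly_top shape(2) by simp
  then have zero_fibers: "int (card {\<rho> \<in> residues. \<rho> $ i = 0}) = l * row_gcd r i" for i
    unfolding row_gcd_def by (intro card_residues_row_zero) (metis of_int_eq_iff of_int_of_nat_eq)
  have "coeff E 3 = (\<Sum>i\<in>UNIV. real (card {\<rho> \<in> residues. \<rho> $ i = 0}))"
    using coeff_box_count_poly_subtop \<open>E = box_count_poly\<close> by simp
  also have "\<dots> = (\<Sum>i\<in>UNIV. real_of_int (l * row_gcd r i))"
    unfolding zero_fibers[symmetric] by simp
  finally show ?thesis
    by (simp only: sum_distrib_left of_int_sum)
qed

end
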